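(* Let $\beta\in(0,1)$, $z>0$, $c>0$, $\delta\in(0,1)$, and let $N$ and $\Delta$ be positive integers. Let $F$ be a continuous cumulative distribution function with support $[\underline{w},\overline{w}]$, $\underline{w}<\overline{w}$, and mean $\mu_w$, and assume $\underline{w}<(1-\beta)z+\beta\mu_w$ and $z+c<\overline{w}$. Put $\Upsilon(x)=\int_{\underline{w}}^{x}x\,dF(w)+\int_{x}^{\overline{w}}w\,dF(w)$. Let $w_R(0)$ be the unique solution in $[\underline{w},\overline{w}]$ of $x=z(1-\beta)+\beta\Upsilon(x)$ and $w_R(n)=(z+c)(1-\beta)+\beta\Upsilon(w_R(n-1))$ for $n\ge1$. Let $w_R^\delta(0)$ be the unique solution in $[\underline{w},\overline{w}]$ of $x=z(1-\beta)+\beta\delta\Upsilon(w_R(\Delta))+\beta(1-\delta)\Upsilon(x)$, and for $n=1,\dots,N$ let $w_R^{\delta}(n)=(z+c)(1-\beta)+\beta\delta\Upsilon(w_R(n-1+\Delta))+\beta(1-\delta)\Upsilon(w_R^\delta(n-1))$. Then $w_R(n+\Delta)>w_R^\delta(n)$ for all $n\in\{0,\dots,N\}$.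
   Context: Interpretation: $w_R(n)$ are reservation wages of a risk-neutral job searcher with $n$ remaining periods of unemployment benefits and no possibility of extension; $w_R^\delta(n)$ are reservation wages when benefits may (once) be extended by $\Delta$ periods with probability $\delta$ between offers. The lemma says that right after an extension the worker is more selective than just before it. *)

theory Defs
  imports "HOL-Probability.Probability"
begin

definition dist_support :: "real measure \<Rightarrow> real set" where
  "dist_support M = {x. \<forall>e>0. 0 < measure M (ball x e)}"

definition Upsilon :: "real measure \<Rightarrow> real \<Rightarrow> real \<Rightarrow> real \<Rightarrow> real" where
  "Upsilon M wl wu x = (LINT w:{wl..x}|M. x) + (LINT w:{x..wu}|M. w)"

fun wR :: "real \<Rightarrow> real \<Rightarrow> real \<Rightarrow> real \<Rightarrow> real \<Rightarrow> (real \<Rightarrow> real) \<Rightarrow> nat \<Rightarrow> real" where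
  "wR \<beta> z c wl wu U 0 = (THE x. x \<in> {wl..wu} \<and> x = z * (1 - \<beta>) + \<beta> * U x)"
| "wR \<beta> z c wl wu U (Suc n) = (z + c) * (1 - \<beta>) + \<beta> * U (wR \<beta> z c wl wu U n)"

text \<open>Reservation wages with possible extension by Delta periods with probability delta.\<close>
fun wRd :: "real \<Rightarrow> real \<Rightarrow> real \<Rightarrow> real \<Rightarrow> nat \<Rightarrow> real \<Rightarrow> real \<Rightarrow> (real \<Rightarrow> real) \<Rightarrow> nat \<Rightarrow> real" where
  "wRd \<beta> z c \<delta> \<Delta> wl wu U 0 =
     (THE x. x \<in> {wl..wu} \<and>
        x = z * (1 - \<beta>) + \<beta> * \<delta> * U (wR \<beta> z c wl wu U \<Delta>) + \<beta> * (1 - \<delta>) * U x)"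
| "wRd \<beta> z c \<delta> \<Delta> wl wu U (Suc n) =
     (z + c) * (1 - \<beta>) + \<beta> * \<delta> * U (wR \<beta> z c wl wu U (n + \<Delta>))
       + \<beta> * (1 - \<delta>) * U (wRd \<beta> z c \<delta> \<Delta> wl wu U n)"

end

theory Submission
  imports Defs
begin

(* Since F is continuous and supported on [wl, wu], Upsilon x is the expectation of max x w.
   Hence Upsilon is nondecreasing, 1-Lipschitz, fixes wu, and is strictly increasing on
   pairs x < y with wl < y, because wl lies in the support.  For such a map the equation
   x = A + k * Upsilon x with 0 <= k < 1 has exactly one solution, and a point lies above
   it iff it exceeds the right-hand side there.  The wages wR n increase, so
   wR Delta > wR 0; at x = wR Delta the right-hand side of the equation for wRd 0 reduces to
   z (1 - beta) + beta Upsilon (wR Delta), which is below wR Delta, so wRd 0 < wR Delta.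
   The recursions for wR (n + Delta) and wRd n then differ only in the term
   beta (1 - delta) Upsilon, which preserves the strict inequality. *)

lemma continuous_on_mono_nonexpansive:
  fixes U :: "real \<Rightarrow> real"
  assumes "mono U" and "\<And>x y. x \<le> y \<Longrightarrow> U y - U x \<le> y - x"
  shows "continuous_on S U"
proof (rule lipschitz_on_continuous_on)
  show "1-lipschitz_on S U"
  proof (rule lipschitz_onI)
    fix x y
    show "dist (U x) (U y) \<le> 1 * dist x y"
      using assms monoD[OF assms(1), of x y] monoD[OF assms(1), of y x]
      by (cases "x \<le> y") (auto simp: dist_real_def)
  qed simp
qed

lemma strict_mono_sub_scaled_nonexpansive:
  fixes U :: "real \<Rightarrow> real"
  assumes "0 \<le> k" "k < 1" and "\<And>x y. x \<le> y \<Longrightarrow> U y - U x \<le> y - x"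
  shows "strict_mono (\<lambda>x. x - k * U x)"
proof (rule strict_monoI)
  fix x y :: real
  assume "x < y"
  have "k * (U y - U x) \<le> k * (y - x)"
    using assms \<open>x < y\<close> by (intro mult_left_mono) auto
  also have "\<dots> < y - x"
    using assms \<open>x < y\<close> by (simp add: mult_less_cancel_right1)
  finally show "x - k * U x < y - k * U y"
    by (simp add: algebra_simps)
qed

lemma fixed_point_affine_nonexpansive:
  fixes U :: "real \<Rightarrow> real"
  assumes k: "0 \<le> k" "k < 1"
    and U_mono: "mono U" and U_nonexp: "\<And>x y. x \<le> y \<Longrightarrow> U y - U x \<le> y - x"
    and lo: "lo \<le> A + k * U lo" and hi: "A + k * U hi \<le> hi"
  defines "p \<equiv> THE x. x \<in> {lo..hi} \<and> x = A + k * U x"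
  shows "p \<in> {lo..hi}" and "p = A + k * U p"
    and "\<And>y. y < A + k * U y \<longleftrightarrow> y < p"
    and "\<And>y. A + k * U y < y \<longleftrightarrow> p < y"
proof -
  define g where "g x = x - k * U x - A" for x
  have g_strict: "strict_mono g"
    using strict_mono_sub_scaled_nonexpansive[OF k U_nonexp]
    by (auto simp: g_def strict_mono_def)
  have "g lo \<le> 0" "0 \<le> g hi"
    using lo hi by (auto simp: g_def)
  then have "lo \<le> hi"
    using g_strict by (metis order.trans strict_mono_less_eq)
  moreover have "continuous_on {lo..hi} g"
    unfolding g_def
    by (intro continuous_intros continuous_on_mono_nonexpansive U_mono U_nonexp)
  ultimately obtain q where q: "q \<in> {lo..hi}" "g q = 0"
    using IVT'[of g lo 0 hi] \<open>g lo \<le> 0\<close> \<open>0 \<le> g hi\<close> by auto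
  have fixed_iff: "x = A + k * U x \<longleftrightarrow> g x = g q" for x
    using q by (auto simp: g_def)
  have "p = q"
    unfolding p_def
  proof (rule the_equality)
    show "q \<in> {lo..hi} \<and> q = A + k * U q"
      using q fixed_iff by blast
  qed (use fixed_iff strict_mono_eq[OF g_strict] in blast)
  then show "p \<in> {lo..hi}" "p = A + k * U p"
    using q fixed_iff by auto
  show "y < A + k * U y \<longleftrightarrow> y < p" for y
    using strict_mono_less[OF g_strict, of y q] q \<open>p = q\<close> by (auto simp: g_def)
  show "A + k * U y < y \<longleftrightarrow> p < y" for y
    using strict_mono_less[OF g_strict, of q y] q \<open>p = q\<close> by (auto simp: g_def)
qed

locale job_search =
  fixes \<beta> z c wl wu :: real and U :: "real \<Rightarrow> real"
  assumes \<beta>_pos: "0 < \<beta>" and \<beta>_less_1: "\<beta> < 1" and c_pos: "0 < c"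
    and U_mono: "mono U"
    and U_nonexp: "\<And>x y. x \<le> y \<Longrightarrow> U y - U x \<le> y - x"
    and U_strict: "\<And>x y. x < y \<Longrightarrow> wl < y \<Longrightarrow> U x < U y"
    and U_top: "U wu = wu"
    and bottom_below: "wl < z * (1 - \<beta>) + \<beta> * U wl"
    and top_above: "z + c < wu"
begin

abbreviation r :: "nat \<Rightarrow> real" where
  "r \<equiv> wR \<beta> z c wl wu U"

lemma top_above_stationary: "z * (1 - \<beta>) + \<beta> * U wu \<le> wu"
proof -
  have "(1 - \<beta>) * z \<le> (1 - \<beta>) * wu"
    using top_above c_pos \<beta>_less_1 by (intro mult_left_mono) auto
  then show ?thesis
    using U_top by (simp add: algebra_simps)
qed

lemma r_0_characterization:
  shows "r 0 \<in> {wl..wu}" and "r 0 = z * (1 - \<beta>) + \<beta> * U (r 0)"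
    and "\<And>y. z * (1 - \<beta>) + \<beta> * U y < y \<longleftrightarrow> r 0 < y"
    and "wl < r 0"
proof -
  note fp = fixed_point_affine_nonexpansive[of \<beta> U wl "z * (1 - \<beta>)" wu,
      OF _ \<beta>_less_1 U_mono U_nonexp _ top_above_stationary]
  show "r 0 \<in> {wl..wu}" "r 0 = z * (1 - \<beta>) + \<beta> * U (r 0)"
    "\<And>y. z * (1 - \<beta>) + \<beta> * U y < y \<longleftrightarrow> r 0 < y"
    "wl < r 0"
    using fp bottom_below \<beta>_pos by auto
qed

lemma r_0_less_r_1: "r 0 < r 1"
proof -
  have "r 1 = r 0 + c * (1 - \<beta>)"
    using r_0_characterization(2) by (simp add: algebra_simps)
  then show ?thesis
    using c_pos \<beta>_less_1 by simp
qed

lemma r_incseq: "incseq r"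
proof (rule incseq_SucI)
  show "r n \<le> r (Suc n)" for n
  proof (induction n)
    case 0
    then show ?case using r_0_less_r_1 by simp
  next
    case (Suc n)
    then show ?case
      using monoD[OF U_mono Suc] \<beta>_pos by simp
  qed
qed

lemma r_0_less: "0 < n \<Longrightarrow> r 0 < r n"
  using r_0_less_r_1 incseqD[OF r_incseq, of 1 n] by simp

lemma r_greater_bottom: "wl < r n"
  using r_0_characterization(4) incseqD[OF r_incseq, of 0 n] by simp

lemma r_le_top: "r n \<le> wu"
proof (induction n)
  case 0
  then show ?case using r_0_characterization(1) by simp
next
  case (Suc n)
  have "\<beta> * U (r n) \<le> \<beta> * wu"
    using monoD[OF U_mono Suc] U_top \<beta>_pos by simp
  moreover have "(z + c) * (1 - \<beta>) \<le> wu * (1 - \<beta>)"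
    using top_above \<beta>_less_1 by simp
  ultimately show ?case
    by (simp add: algebra_simps)
qed

context
  fixes \<delta> :: real and \<Delta> :: nat
  assumes \<delta>_nonneg: "0 \<le> \<delta>" and \<delta>_less_1: "\<delta> < 1" and \<Delta>_pos: "0 < \<Delta>"
begin

abbreviation rd :: "nat \<Rightarrow> real" where
  "rd \<equiv> wRd \<beta> z c \<delta> \<Delta> wl wu U"

lemma rd_0_less: "rd 0 < r \<Delta>"
proof -
  define A where "A = z * (1 - \<beta>) + \<beta> * \<delta> * U (r \<Delta>)"
  have mix: "A + \<beta> * (1 - \<delta>) * U x
      = z * (1 - \<beta>) + \<beta> * \<delta> * (U (r \<Delta>) - U x) + \<beta> * U x" for x
    by (simp add: A_def algebra_simps)
  have k: "0 \<le> \<beta> * (1 - \<delta>)" "\<beta> * (1 - \<delta>) < 1"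
    using \<beta>_pos \<beta>_less_1 \<delta>_nonneg \<delta>_less_1
    by (auto intro: le_less_trans[OF mult_left_le])
  have "0 \<le> \<beta> * \<delta> * (U (r \<Delta>) - U wl)"
    using monoD[OF U_mono less_imp_le[OF r_greater_bottom]] \<beta>_pos \<delta>_nonneg by simp
  then have lo: "wl \<le> A + \<beta> * (1 - \<delta>) * U wl"
    using bottom_below unfolding mix by linarith
  have hi: "A + \<beta> * (1 - \<delta>) * U wu \<le> wu"
  proof -
    have "\<beta> * \<delta> * (U (r \<Delta>) - U wu) \<le> 0"
      using monoD[OF U_mono r_le_top] \<beta>_pos \<delta>_nonneg
      by (simp add: mult_nonneg_nonpos)
    with top_above_stationary show ?thesis
      unfolding mix by linarith
  qed
  note fp = fixed_point_affine_nonexpansive[OF k U_mono U_nonexp lo hi]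
  have "A + \<beta> * (1 - \<delta>) * U (r \<Delta>) < r \<Delta>"
    using r_0_characterization(3) r_0_less[OF \<Delta>_pos] by (simp only: mix) simp
  then show ?thesis
    using fp(4) by (simp add: A_def)
qed

lemma rd_less_r: "rd n < r (n + \<Delta>)"
proof (induction n)
  case 0
  then show ?case using rd_0_less by simp
next
  case (Suc n)
  have "U (rd n) < U (r (n + \<Delta>))"
    using U_strict[OF Suc r_greater_bottom] .
  then have "\<beta> * (1 - \<delta>) * U (rd n) < \<beta> * (1 - \<delta>) * U (r (n + \<Delta>))"
    using \<beta>_pos \<delta>_less_1 by simp
  then show ?case
    by (simp add: algebra_simps)
qed

end

end

lemma AE_in_dist_support:
  assumes "finite_measure M" and sets_M: "sets M = sets borel"
  shows "AE w in M. w \<in> dist_support M"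
proof -
  interpret finite_measure M by fact
  define B where "B = {ball x e | x e. 0 < e \<and> measure M (ball x e) = 0}"
  have cover: "- dist_support M \<subseteq> \<Union>B"
  proof
    fix x assume "x \<in> - dist_support M"
    then obtain e where "0 < e" "measure M (ball x e) \<le> 0"
      unfolding dist_support_def by (auto simp: not_less)
    then have "ball x e \<in> B"
      using measure_nonneg[of M "ball x e"] unfolding B_def by fastforce
    then show "x \<in> \<Union>B"
      using \<open>0 < e\<close> by (meson UnionI centre_in_ball)
  qed
  obtain B' where B': "B' \<subseteq> B" "countable B'" "\<Union>B' = \<Union>B"
    using Lindelof[of B] unfolding B_def by auto
  have "\<Union>B' \<in> null_sets M"
  proof (rule null_sets_UN'[OF B'(2), of id, simplified])
    fix b assume "b \<in> B'"
    then obtain x e where "b = ball x e" "measure M (ball x e) = 0"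
      using B'(1) unfolding B_def by auto
    then show "b \<in> null_sets M"
      using sets_M by (simp add: emeasure_eq_measure null_sets_def)
  qed
  moreover have "{w \<in> space M. w \<notin> dist_support M} \<subseteq> \<Union>B'"
    using cover B'(3) by auto
  ultimately show ?thesis
    by (rule AE_I')
qed

context real_distribution
begin

context
  assumes integrable_id: "integrable M (\<lambda>w. w)"
begin

lemma integrable_max_const: "integrable M (\<lambda>w. max x w)"
  using integrable_id by auto

lemma expectation_max_mono: "x \<le> y \<Longrightarrow> (LINT w|M. max x w) \<le> (LINT w|M. max y w)"
  by (intro integral_mono integrable_max_const) auto

lemma expectation_max_diff_le:
  assumes "x \<le> y"
  shows "(LINT w|M. max y w) - (LINT w|M. max x w) \<le> y - x"
proof -
  have "(LINT w|M. max y w) - (LINT w|M. max x w) = (LINT w|M. max y w - max x w)"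
    by (simp add: integrable_max_const)
  also have "\<dots> \<le> (LINT w|M. y - x)"
    using assms by (intro integral_mono integrable_max_const Bochner_Integration.integrable_diff) auto
  finally show ?thesis
    using prob_space by simp
qed

lemma expectation_le_expectation_max: "(LINT w|M. w) \<le> (LINT w|M. max x w)"
  by (intro integral_mono integrable_id integrable_max_const) auto

lemma expectation_max_upper_bound:
  assumes "AE w in M. w \<le> b"
  shows "(LINT w|M. max b w) = b"
proof -
  have "(LINT w|M. max b w) = (LINT w|M. b)"
    using assms by (intro integral_cong_AE) (auto elim: eventually_mono)
  then show ?thesis
    using prob_space by simp
qed

lemma expectation_max_strict:
  assumes "b \<in> dist_support M" and "x < y" and "b < y"
  shows "(LINT w|M. max x w) < (LINT w|M. max y w)"
proof -
  define m where "m = (max x b + y) / 2"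
  have m: "x < m" "b < m" "m < y"
    using assms by (auto simp: m_def)
  have "0 < measure M (ball b (m - b))"
    using assms(1) m unfolding dist_support_def by auto
  also have "\<dots> \<le> measure M {..m}"
    by (intro finite_measure_mono) (auto simp: dist_real_def)
  finally have "0 < measure M {..m} * (y - m)"
    using m by simp
  also have "\<dots> = (LINT w|M. indicator {..m} w * (y - m))"
    by simp
  also have "\<dots> \<le> (LINT w|M. max y w - max x w)"
    using m
    by (intro integral_mono Bochner_Integration.integrable_diff integrable_max_const
        integrable_mult_left integrable_real_indicator)
       (auto simp: emeasure_eq_measure indicator_def)
  also have "\<dots> = (LINT w|M. max y w) - (LINT w|M. max x w)"
    by (simp add: integrable_max_const)
  finally show ?thesis
    by simp
qed

end

lemma Upsilon_eq_expectation_max: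
  assumes supp: "AE w in M. w \<in> {wl..wu}" and atomless: "measure M {x} = 0"
  shows "Upsilon M wl wu x = (LINT w|M. max x w)"
proof -
  have bounded: "integrable M f"
    if "f \<in> borel_measurable borel" "AE w in M. norm (f w) \<le> B" for f :: "real \<Rightarrow> real" and B
    using that by (intro integrable_const_bound[of f B]) auto
  have "AE w in M. w \<noteq> x"
    using atomless by (intro AE_I'[of "{x}"]) (auto simp: emeasure_eq_measure null_sets_def)
  with supp have "AE w in M. max x w = indicator {wl..x} w * x + indicator {x..wu} w * w"
    by eventually_elim (auto simp: indicator_def)
  then have "(LINT w|M. max x w)
      = (LINT w|M. indicator {wl..x} w * x + indicator {x..wu} w * w)"
    by (intro integral_cong_AE) auto
  also have "\<dots> = (LINT w|M. indicator {wl..x} w * x) + (LINT w|M. indicator {x..wu} w * w)"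
  proof (intro Bochner_Integration.integral_add bounded)
    show "AE w in M. norm (indicator {wl..x} w * x) \<le> \<bar>x\<bar>"
      by (auto simp: indicator_def)
    show "AE w in M. norm (indicator {x..wu} w * w) \<le> \<bar>wl\<bar> + \<bar>wu\<bar>"
      using supp by eventually_elim (auto simp: indicator_def)
  qed auto
  finally show ?thesis
    by (simp add: Upsilon_def set_lebesgue_integral_def mult.commute)
qed

end

theorem lemma5:
  fixes \<beta> z c \<delta> wl wu :: real and N \<Delta> :: nat and M :: "real measure"
  assumes "0 < \<beta>" "\<beta> < 1" "0 < z" "0 < c" "0 < \<delta>" "\<delta> < 1"
    and "0 < N" "0 < \<Delta>"
    and "real_distribution M"
    and "\<And>x. isCont (cdf M) x"
    and "dist_support M = {wl..wu}" "wl < wu"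
    and "wl < (1 - \<beta>) * z + \<beta> * (LINT w|M. w)"
    and "z + c < wu"
  shows "\<forall>n \<le> N. wR \<beta> z c wl wu (Upsilon M wl wu) (n + \<Delta>)
                 > wRd \<beta> z c \<delta> \<Delta> wl wu (Upsilon M wl wu) n"
proof -
  interpret real_distribution M by fact
  have supp: "AE w in M. w \<in> {wl..wu}"
    using AE_in_dist_support[OF finite_measure_axioms] assms(11) by simp
  have integrable_id: "integrable M (\<lambda>w. w)"
    using supp by (intro integrable_const_bound[where B = "\<bar>wl\<bar> + \<bar>wu\<bar>"])
      (auto elim: eventually_mono)
  have Upsilon: "Upsilon M wl wu = (\<lambda>x. LINT w|M. max x w)"
    using Upsilon_eq_expectation_max[OF supp] isCont_cdf assms(10) by auto
  let ?V = "\<lambda>x. LINT w|M. max x w"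
  have "job_search \<beta> z c wl wu ?V"
  proof
    show "mono ?V"
      by (intro monoI expectation_max_mono[OF integrable_id])
    show "?V y - ?V x \<le> y - x" if "x \<le> y" for x y
      using expectation_max_diff_le[OF integrable_id that] .
    show "?V x < ?V y" if "x < y" "wl < y" for x y
      using expectation_max_strict[OF integrable_id _ that] assms(11,12) by simp
    show "?V wu = wu"
      using expectation_max_upper_bound[OF integrable_id] supp by (auto elim: eventually_mono)
    have "\<beta> * (LINT w|M. w) \<le> \<beta> * ?V wl"
      using assms(1) expectation_le_expectation_max[OF integrable_id]
      by (intro mult_left_mono) auto
    then show "wl < z * (1 - \<beta>) + \<beta> * ?V wl"
      using assms(13) by (simp add: mult.commute)
  qed (use assms in auto)
  then show ?thesis
    unfolding Upsilon using job_search.rd_less_r assms(5,6,8) by auto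
qed

end
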